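(* Let $c_1\neq c_2$ be points in $[0,1]$ and consider the scheme (EQRF2) $$y_{n+1}=e^{\tau A}y_n+\tau\varphi_1(\tau A)\alpha_{0,n}+\Gamma(1+r)\Bigl((t_n+\tau)^{1+r}\varphi_{1+r}\bigl((t_n+\tau)A\bigr)-t_n^{1+r}e^{\tau A}\varphi_{1+r}(t_nA)\Bigr)\alpha_{1,n},$$ $n=0,\dots,N-1$, started from the exact initial value $y_0$, where $$\alpha_{1,n}=\frac{h((t_n+c_2\tau)^r)-h((t_n+c_1\tau)^r)}{(t_n+c_2\tau)^r-(t_n+c_1\tau)^r},\qquad \alpha_{0,n}=h((t_n+c_1\tau)^r)-(t_n+c_1\tau)^r\alpha_{1,n}.$$ Assume $h$ is twice differentiable on $[0,\infty)$ with bounded derivatives $h',h''$. Then for all $N\in\mathbb{N}$ and $0\le n\le N$, $$\|y(t_n)-y_n\|\le\begin{cases}C\tau^{\min\{1+2r,\,2\}}, & r\neq\tfrac12,\\ C\tau^2\bigl(1+\lvert\log\tau\rvert\bigr), & r=\tfrac12,\end{cases}$$ where $C$ may depend on $T$ (and on $r,h,c_1,c_2$ and the semigroup) but not on $n$ or $\tau$.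
   Context: $(X,\|\cdot\|)$ is a Banach space and $A:\mathcal{D}(A)\subset X\to X$ is a linear operator generating a strongly continuous semigroup $\{e^{tA}\}_{t\ge0}$ on $X$. Fix $T>0$, $0<r<1$, $y_0\in X$ and $h:[0,\infty)\to X$. The problem is $y'(t)=Ay(t)+h(t^r)$, $y(0)=y_0$, $t\in[0,T]$, with (mild) solution $y(t)=e^{tA}y_0+\int_0^te^{(t-s)A}h(s^r)\,ds$. Time grid: $N\in\mathbb{N}$, $\tau=T/N$, $t_n=n\tau$. For $\lambda>0$ and $t\ge0$ the fractional $\varphi$ function is the bounded operator $\varphi_\lambda(tA)v=\frac{1}{\Gamma(\lambda)}\int_0^1e^{(1-\theta)tA}\theta^{\lambda-1}v\,d\theta$ ($v\in X$), $\Gamma$ being Euler's gamma function; in particular $\tau\varphi_1(\tau A)v=\int_0^\tau e^{(\tau-s)A}v\,ds$. Convention $0^{1+r}=0$. *)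

theory Defs
  imports "HOL-Analysis.Analysis"
begin

text \<open>A strongly continuous (C0) semigroup on a Banach space, given by the family
  S t = e^{tA}, t \<ge> 0.  The generator A is determined by S; the statement only
  involves A through e^{tA} and the phi functions.\<close>
definition C0_semigroup :: "(real \<Rightarrow> 'a::banach \<Rightarrow> 'a) \<Rightarrow> bool" where
  "C0_semigroup S \<longleftrightarrow>
     (\<forall>t\<ge>0. bounded_linear (S t)) \<and>
     S 0 = id \<and>
     (\<forall>s\<ge>0. \<forall>t\<ge>0. S (s + t) = S s \<circ> S t) \<and>
     (\<forall>v. ((\<lambda>t. S t v) \<longlongrightarrow> v) (at_right 0))"

text \<open>Fractional phi function: phi_lam(tA) v = 1/Gamma(lam) int_0^1 e^{(1-th)tA} th^(lam-1) v dth.\<close>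
definition phi_frac :: "(real \<Rightarrow> 'a::banach \<Rightarrow> 'a) \<Rightarrow> real \<Rightarrow> real \<Rightarrow> 'a \<Rightarrow> 'a" where
  "phi_frac S lam t v =
     (1 / Gamma lam) *\<^sub>R integral {0..1} (\<lambda>\<theta>. (\<theta> powr (lam - 1)) *\<^sub>R S ((1 - \<theta>) * t) v)"

text \<open>Mild solution of y' = A y + h(t^r), y(0) = y0.\<close>
definition mild_sol :: "(real \<Rightarrow> 'a::banach \<Rightarrow> 'a) \<Rightarrow> (real \<Rightarrow> 'a) \<Rightarrow> real \<Rightarrow> 'a \<Rightarrow> real \<Rightarrow> 'a" where
  "mild_sol S h r y0 t = S t y0 + integral {0..t} (\<lambda>s. S (t - s) (h (s powr r)))"

text \<open>The scheme EQRF2 with step size tau, t_n = n tau.  Note 0 powr x = 0.\<close>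
fun eqrf2 :: "(real \<Rightarrow> 'a::banach \<Rightarrow> 'a) \<Rightarrow> (real \<Rightarrow> 'a) \<Rightarrow> real \<Rightarrow> real \<Rightarrow> real \<Rightarrow> real \<Rightarrow> 'a \<Rightarrow> nat \<Rightarrow> 'a" where
  "eqrf2 S h r c1 c2 \<tau> y0 0 = y0"
| "eqrf2 S h r c1 c2 \<tau> y0 (Suc n) =
    (let tn = real n * \<tau>;
         a = (tn + c1 * \<tau>) powr r;
         b = (tn + c2 * \<tau>) powr r;
         \<alpha>1 = (1 / (b - a)) *\<^sub>R (h b - h a);
         \<alpha>0 = h a - a *\<^sub>R \<alpha>1
     in S \<tau> (eqrf2 S h r c1 c2 \<tau> y0 n)
        + \<tau> *\<^sub>R phi_frac S 1 \<tau> \<alpha>0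
        + Gamma (1 + r) *\<^sub>R
            ((tn + \<tau>) powr (1 + r) *\<^sub>R phi_frac S (1 + r) (tn + \<tau>) \<alpha>1
             - tn powr (1 + r) *\<^sub>R S \<tau> (phi_frac S (1 + r) tn \<alpha>1)))"

end

theory Submission
  imports Defs
begin

text \<open>The error \<open>e\<^sub>n = y(t\<^sub>n) - y\<^sub>n\<close> satisfies \<open>e\<^sub>n\<^sub>+\<^sub>1 = e\<^sup>\<tau>\<^sup>A e\<^sub>n + \<delta>\<^sub>n\<close>, because one step of
  EQRF2 is the exact variation-of-constants step with \<open>h(s\<^sup>r)\<close> replaced on \<open>[t\<^sub>n, t\<^sub>n\<^sub>+\<^sub>1]\<close>
  by its linear interpolant in the variable \<open>u = s\<^sup>r\<close>. Since \<open>h''\<close> is bounded, the interpolation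
  error is \<open>O((t\<^sub>n\<^sub>+\<^sub>1\<^sup>r - t\<^sub>n\<^sup>r)\<^sup>2)\<close>, so \<open>\<parallel>\<delta>\<^sub>n\<parallel> \<le> C \<tau>\<^sup>1\<^sup>+\<^sup>2\<^sup>r ((n + 1)\<^sup>r - n\<^sup>r)\<^sup>2\<close>. Summing with the
  uniform bound of \<open>e\<^sup>t\<^sup>A\<close> on \<open>[0, T]\<close> and \<open>((k + 1)\<^sup>r - k\<^sup>r)\<^sup>2 \<le> k\<^sup>2\<^sup>r\<^sup>-\<^sup>2\<close>, the global error
  is at most \<open>C \<tau>\<^sup>1\<^sup>+\<^sup>2\<^sup>r\<close> times a sum that is bounded for \<open>r < 1/2\<close>, of order \<open>log N\<close> for
  \<open>r = 1/2\<close> and of order \<open>N\<^sup>2\<^sup>r\<^sup>-\<^sup>1\<close> for \<open>r > 1/2\<close>.\<close>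

lemma linear_norm_le_of_ball:
  fixes f :: "'a::real_normed_vector \<Rightarrow> 'b::real_normed_vector"
  assumes f: "linear f" and e: "0 < e" and bound: "\<And>y. y \<in> ball x0 e \<Longrightarrow> norm (f y) \<le> K"
  shows "norm (f x) \<le> (4 * K / e) * norm x"
proof (cases "x = 0")
  case True
  then show ?thesis using linear_0[OF f] by simp
next
  case False
  define c where "c = e / (2 * norm x)"
  have c: "c > 0" using False e by (simp add: c_def)
  have "norm (c *\<^sub>R x) < e" using False e by (simp add: c_def)
  then have "norm (f (x0 + c *\<^sub>R x)) \<le> K" and "norm (f x0) \<le> K"
    using e by (auto intro!: bound simp: dist_norm)
  moreover have "f (c *\<^sub>R x) = f (x0 + c *\<^sub>R x) - f x0"
    by (simp add: linear_add[OF f])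
  ultimately have "norm (f (c *\<^sub>R x)) \<le> 2 * K"
    using norm_triangle_ineq4[of "f (x0 + c *\<^sub>R x)" "f x0"] by (simp only:)
  then have "c * norm (f x) \<le> 2 * K"
    using c by (simp add: linear_scale[OF f])
  then have "norm (f x) \<le> 2 * K / c" using c by (simp add: field_simps)
  also have "\<dots> = (4 * K / e) * norm x" using False e by (simp add: c_def field_simps)
  finally show ?thesis .
qed

text \<open>By Baire's theorem one of the closed sets \<open>{x. \<forall>n. \<parallel>T n x\<parallel> \<le> k}\<close> contains a ball.\<close>

lemma uniform_boundedness:
  fixes T :: "nat \<Rightarrow> 'a::banach \<Rightarrow> 'b::real_normed_vector"
  assumes bl: "\<And>n. bounded_linear (T n)" and pointwise: "\<And>x. \<exists>B. \<forall>n. norm (T n x) \<le> B"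
  shows "\<exists>B. \<forall>n x. norm (T n x) \<le> B * norm x"
proof -
  define F where "F k = {x. \<forall>n. norm (T n x) \<le> real k}" for k :: nat
  have closed_F: "closed (F k)" for k
  proof -
    have "F k = (\<Inter>n. {x. norm (T n x) \<le> real k})" by (auto simp: F_def)
    moreover have "closed {x. norm (T n x) \<le> real k}" for n
      by (intro closed_Collect_le continuous_intros linear_continuous_on bounded_linear.linear bl
           continuous_on_norm)
    ultimately show ?thesis by auto
  qed
  have cover: "(\<Union>k. F k) = UNIV"
  proof safe
    fix x :: 'a
    obtain B where "\<forall>n. norm (T n x) \<le> B" using pointwise by blast
    moreover obtain k :: nat where "B \<le> real k" using real_arch_simple by blast
    ultimately have "x \<in> F k" unfolding F_def by (auto intro: order_trans)
    then show "x \<in> (\<Union>k. F k)" by blast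
  qed simp
  have "\<exists>k. interior (F k) \<noteq> {}"
  proof (rule ccontr)
    assume "\<not> ?thesis"
    then have "euclidean interior_of \<Union>(range F) = {}"
      by (intro Baire_category_alt) (auto simp: completely_metrizable_space_euclidean closed_F)
    then show False using cover by simp
  qed
  then obtain k x0 where "x0 \<in> interior (F k)" by blast
  then obtain e where e: "e > 0" "ball x0 e \<subseteq> F k"
    using open_contains_ball_eq open_interior interior_subset by (metis subset_trans)
  then have "norm (T n y) \<le> real k" if "y \<in> ball x0 e" for n y
    using that by (auto simp: F_def)
  then show ?thesis
    using linear_norm_le_of_ball[OF bounded_linear.linear[OF bl] e(1)] by blast
qed

context
  fixes S :: "real \<Rightarrow> 'a::banach \<Rightarrow> 'a"
  assumes C0: "C0_semigroup S"
begin

lemma semigroup_bounded_linear: "t \<ge> 0 \<Longrightarrow> bounded_linear (S t)"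
  using C0 by (auto simp: C0_semigroup_def)

lemma semigroup_linear: "t \<ge> 0 \<Longrightarrow> linear (S t)"
  using semigroup_bounded_linear bounded_linear.linear by blast

lemma semigroup_zero [simp]: "S 0 v = v"
  using C0 by (auto simp: C0_semigroup_def)

lemma semigroup_add: "s \<ge> 0 \<Longrightarrow> t \<ge> 0 \<Longrightarrow> S (s + t) v = S s (S t v)"
  using C0 unfolding C0_semigroup_def by (metis comp_apply)

lemma semigroup_near_identity:
  assumes "e > 0"
  shows "\<exists>d>0. \<forall>t. 0 \<le> t \<and> t < d \<longrightarrow> norm (S t v - v) < e"
proof -
  have "((\<lambda>t. S t v) \<longlongrightarrow> v) (at_right 0)" using C0 by (auto simp: C0_semigroup_def)
  then have "eventually (\<lambda>t. dist (S t v) v < e) (at_right 0)"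
    using assms by (auto simp: tendsto_iff)
  then obtain d where d: "d > 0" "\<And>t. t > 0 \<Longrightarrow> t < d \<Longrightarrow> dist (S t v) v < e"
    by (auto simp: eventually_at_right_field)
  have "norm (S t v - v) < e" if "0 \<le> t" "t < d" for t
    using d that assms by (cases "t = 0") (auto simp: dist_norm)
  then show ?thesis using d(1) by blast
qed

text \<open>Otherwise there are times \<open>t\<^sub>n \<rightarrow> 0\<close> with \<open>\<parallel>S t\<^sub>n\<parallel> > n\<close>; but every orbit
  \<open>S t\<^sub>n x \<rightarrow> x\<close> is bounded, contradicting the uniform boundedness principle.\<close>

lemma semigroup_locally_bounded:
  "\<exists>d>0. \<exists>M\<ge>1. \<forall>t v. 0 \<le> t \<and> t \<le> d \<longrightarrow> norm (S t v) \<le> M * norm v"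
proof (rule ccontr)
  assume unbounded: "\<not> ?thesis"
  have "\<exists>t v. 0 \<le> t \<and> t \<le> 1 / (real n + 1) \<and> norm (S t v) > real (n + 1) * norm v" for n
  proof -
    have "\<not> (\<forall>t v. 0 \<le> t \<and> t \<le> 1 / (real n + 1) \<longrightarrow> norm (S t v) \<le> real (n + 1) * norm v)"
      using unbounded by (metis add_nonneg_pos le_add_same_cancel2 linorder_not_le of_nat_0_le_iff
          of_nat_1 of_nat_add zero_less_divide_1_iff zero_less_one)
    then show ?thesis by (auto simp: not_le)
  qed
  then obtain t v where tv: "\<And>n. 0 \<le> t n" "\<And>n. t n \<le> 1 / (real n + 1)"
    "\<And>n. norm (S (t n) (v n)) > real (n + 1) * norm (v n)"
    by metis
  have "\<exists>B. \<forall>n x. norm (S (t n) x) \<le> B * norm x"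
  proof (rule uniform_boundedness)
    show "bounded_linear (S (t n))" for n using tv semigroup_bounded_linear by auto
    fix x
    have t_lim: "t \<longlonglongrightarrow> 0"
    proof (rule tendsto_sandwich[of "\<lambda>_. 0" _ _ "\<lambda>n. 1 / (real n + 1)"])
      show "(\<lambda>n. 1 / (real n + 1)) \<longlonglongrightarrow> 0"
        using LIMSEQ_inverse_real_of_nat by (simp add: inverse_eq_divide add.commute)
    qed (use tv in auto)
    have "(\<lambda>n. S (t n) x) \<longlonglongrightarrow> x"
    proof (rule LIMSEQ_I)
      fix e :: real assume "e > 0"
      then obtain d where d: "d > 0" "\<forall>s. 0 \<le> s \<and> s < d \<longrightarrow> norm (S s x - x) < e"
        using semigroup_near_identity by blast
      obtain N where "\<forall>n\<ge>N. norm (t n - 0) < d" using LIMSEQ_D[OF t_lim d(1)] by blast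
      then show "\<exists>N. \<forall>n\<ge>N. norm (S (t n) x - x) < e" using d tv by auto
    qed
    then have "bounded (range (\<lambda>n. S (t n) x))"
      using convergent_imp_bounded by blast
    then show "\<exists>B. \<forall>n. norm (S (t n) x) \<le> B"
      by (auto simp: bounded_iff)
  qed
  then obtain B where B: "\<And>n x. norm (S (t n) x) \<le> B * norm x" by blast
  obtain n :: nat where "B \<le> real n" using real_arch_simple by blast
  then have "B * norm (v n) \<le> real (n + 1) * norm (v n)"
    by (intro mult_right_mono) auto
  then show False using B[of n "v n"] tv(3)[of n] by linarith
qed

lemma semigroup_bounded:
  "\<exists>M\<ge>1. \<forall>t v. 0 \<le> t \<and> t \<le> K \<longrightarrow> norm (S t v) \<le> M * norm v"
proof -
  obtain d M where dM: "d > 0" "M \<ge> 1" "\<And>t v. 0 \<le> t \<Longrightarrow> t \<le> d \<Longrightarrow> norm (S t v) \<le> M * norm v"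
    using semigroup_locally_bounded by blast
  have bound_m: "\<forall>t v. 0 \<le> t \<and> t \<le> real m * d \<longrightarrow> norm (S t v) \<le> M ^ (m + 1) * norm v" for m
  proof (induction m)
    case 0
    then show ?case using dM by auto
  next
    case (Suc m)
    show ?case
    proof (intro allI impI)
      fix t v assume t: "0 \<le> t \<and> t \<le> real (Suc m) * d"
      show "norm (S t v) \<le> M ^ (Suc m + 1) * norm v"
      proof (cases "t \<le> d")
        case True
        then have "norm (S t v) \<le> M * norm v" using dM t by auto
        also have "\<dots> \<le> M ^ (Suc m + 1) * norm v"
          using power_increasing[of 1 "Suc m + 1" M] dM(2) by (intro mult_right_mono) auto
        finally show ?thesis .
      next
        case False
        then have "S t v = S d (S (t - d) v)" using semigroup_add[of d "t - d" v] dM(1) by auto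
        then have "norm (S t v) \<le> M * norm (S (t - d) v)"
          using dM False by auto
        also have "\<dots> \<le> M * (M ^ (m + 1) * norm v)"
          using Suc[rule_format, of "t - d" v] False t dM
          by (intro mult_left_mono) (auto simp: algebra_simps)
        finally show ?thesis by (simp add: algebra_simps)
      qed
    qed
  qed
  obtain m :: nat where "K / d \<le> real m" using real_arch_simple by blast
  then have "K \<le> real m * d" using dM(1) by (simp add: field_simps)
  then show ?thesis using bound_m[of m] dM(2)
    by (intro exI[of _ "M ^ (m + 1)"]) (auto intro: one_le_power order_trans)
qed

lemma norm_semigroup_diff_le:
  assumes M: "\<And>t v. 0 \<le> t \<Longrightarrow> t \<le> K \<Longrightarrow> norm (S t v) \<le> M * norm v"
    and ab: "0 \<le> a" "0 \<le> b" "a \<le> K" "b \<le> K"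
  shows "norm (S a w - S b w) \<le> M * norm (S \<bar>a - b\<bar> w - w)"
proof -
  have *: "norm (S y w - S x w) \<le> M * norm (S (y - x) w - w)"
    if "0 \<le> x" "x \<le> y" "y \<le> K" for x y
  proof -
    have "S y w = S x (S (y - x) w)" using semigroup_add[of x "y - x" w] that by simp
    then have "S y w - S x w = S x (S (y - x) w - w)"
      using linear_diff[OF semigroup_linear] that by simp
    then show ?thesis using M[of x] that by simp
  qed
  show ?thesis
    using *[of b a] *[of a b] ab by (cases "b \<le> a") (auto simp: norm_minus_commute)
qed

text \<open>Strong continuity is only pointwise, so joint continuity of \<open>(t, v) \<mapsto> S t v\<close> needs
  the uniform bound on \<open>S\<close> over bounded times.\<close>

lemma continuous_on_semigroup_apply:
  fixes f :: "'b::metric_space \<Rightarrow> real" and g :: "'b \<Rightarrow> 'a"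
  assumes f: "continuous_on D f" and g: "continuous_on D g"
    and f_range: "\<And>x. x \<in> D \<Longrightarrow> 0 \<le> f x \<and> f x \<le> K"
  shows "continuous_on D (\<lambda>x. S (f x) (g x))"
  unfolding continuous_on_iff
proof (intro ballI allI impI)
  obtain M where M: "M \<ge> 1" "\<And>t v. 0 \<le> t \<Longrightarrow> t \<le> K \<Longrightarrow> norm (S t v) \<le> M * norm v"
    using semigroup_bounded[of K] by blast
  fix x e assume x: "x \<in> D" and e: "(0::real) < e"
  have e2: "e / (2 * M) > 0" using e M by simp
  obtain d1 where d1: "d1 > 0" "\<And>t. 0 \<le> t \<Longrightarrow> t < d1 \<Longrightarrow> norm (S t (g x) - g x) < e / (2 * M)"
    using semigroup_near_identity[OF e2, of "g x"] by blast
  obtain d2 where d2: "d2 > 0" "\<And>x'. x' \<in> D \<Longrightarrow> dist x' x < d2 \<Longrightarrow> dist (f x') (f x) < d1"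
    using f x d1(1) unfolding continuous_on_iff by blast
  obtain d3 where d3: "d3 > 0" "\<And>x'. x' \<in> D \<Longrightarrow> dist x' x < d3 \<Longrightarrow> dist (g x') (g x) < e / (2 * M)"
    using g x e2 unfolding continuous_on_iff by blast
  show "\<exists>d>0. \<forall>x'\<in>D. dist x' x < d \<longrightarrow> dist (S (f x') (g x')) (S (f x) (g x)) < e"
  proof (intro exI[of _ "min d2 d3"] conjI ballI impI)
    fix x' assume x': "x' \<in> D" and dx: "dist x' x < min d2 d3"
    have fx: "0 \<le> f x'" "f x' \<le> K" "0 \<le> f x" "f x \<le> K" using f_range x x' by auto
    have "S (f x') (g x') - S (f x) (g x) = S (f x') (g x' - g x) + (S (f x') (g x) - S (f x) (g x))"
      using linear_diff[OF semigroup_linear[OF fx(1)]] by simp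
    then have "norm (S (f x') (g x') - S (f x) (g x))
        \<le> norm (S (f x') (g x' - g x)) + norm (S (f x') (g x) - S (f x) (g x))"
      by (metis norm_triangle_ineq)
    also have "\<dots> \<le> M * norm (g x' - g x) + M * norm (S \<bar>f x' - f x\<bar> (g x) - g x)"
      by (intro add_mono M(2) norm_semigroup_diff_le[OF M(2)]) (use fx in auto)
    also have "\<dots> < M * (e / (2 * M)) + M * (e / (2 * M))"
    proof (intro add_less_le_mono mult_strict_left_mono mult_left_mono)
      show "norm (g x' - g x) < e / (2 * M)" using d3 x' dx by (auto simp: dist_norm)
      have "\<bar>f x' - f x\<bar> < d1" using d2 x' dx by (auto simp: dist_real_def)
      then show "norm (S \<bar>f x' - f x\<bar> (g x) - g x) \<le> e / (2 * M)"
        using d1 by (auto intro: less_imp_le)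
    qed (use M in auto)
    also have "\<dots> = e" using M by (simp add: field_simps)
    finally show "dist (S (f x') (g x')) (S (f x) (g x)) < e" by (simp add: dist_norm)
  qed (use d2 d3 in auto)
qed

lemma continuous_on_convolution:
  assumes "continuous_on {0..t} g"
  shows "continuous_on {0..t} (\<lambda>s. S (t - s) (g s))"
  by (rule continuous_on_semigroup_apply[OF _ assms, of _ t]) (auto intro!: continuous_intros)

lemma integrable_convolution:
  assumes "continuous_on {0..t} g"
  shows "(\<lambda>s. S (t - s) (g s)) integrable_on {0..t}"
  by (rule integrable_continuous_interval, rule continuous_on_convolution[OF assms])

lemma integral_convolution_split:
  assumes g: "continuous_on {0..a + \<tau>} g" and a: "0 \<le> a" and \<tau>: "0 \<le> \<tau>"
  shows "integral {0..a + \<tau>} (\<lambda>s. S (a + \<tau> - s) (g s)) =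
         S \<tau> (integral {0..a} (\<lambda>s. S (a - s) (g s))) + integral {0..\<tau>} (\<lambda>\<sigma>. S (\<tau> - \<sigma>) (g (a + \<sigma>)))"
proof -
  define F where "F s = S (a + \<tau> - s) (g s)" for s
  have "continuous_on {0..a} g" using g by (rule continuous_on_subset) (use \<tau> in auto)
  then have G: "(\<lambda>s. S (a - s) (g s)) integrable_on {0..a}"
    by (rule integrable_convolution)
  have "integral {0..a + \<tau>} F = integral {0..a} F + integral {a..a + \<tau>} F"
    unfolding F_def
    using Henstock_Kurzweil_Integration.integral_combine[OF a _ integrable_convolution[OF g]] \<tau>
    by simp
  also have "integral {0..a} F = integral {0..a} (S \<tau> \<circ> (\<lambda>s. S (a - s) (g s)))"
  proof (rule integral_cong)
    fix s assume "s \<in> {0..a}"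
    then show "F s = (S \<tau> \<circ> (\<lambda>s. S (a - s) (g s))) s"
      using semigroup_add[of \<tau> "a - s" "g s"] \<tau> unfolding F_def by (simp add: algebra_simps)
  qed
  also have "\<dots> = S \<tau> (integral {0..a} (\<lambda>s. S (a - s) (g s)))"
    by (rule integral_linear[OF G semigroup_bounded_linear[OF \<tau>]])
  also have "integral {a..a + \<tau>} F = integral {a - a..a + \<tau> - a} (\<lambda>x. F (x + a))"
    by (rule integral_shift_real_ivl[symmetric])
  also have "\<dots> = integral {0..\<tau>} (\<lambda>\<sigma>. S (\<tau> - \<sigma>) (g (a + \<sigma>)))"
    unfolding F_def by (simp add: algebra_simps)
  finally show ?thesis unfolding F_def .
qed

lemma norm_integral_convolution_le:
  assumes g: "continuous_on {0..\<tau>} g" and \<tau>: "0 \<le> \<tau>"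
    and G: "\<And>\<sigma>. \<sigma> \<in> {0..\<tau>} \<Longrightarrow> norm (g \<sigma>) \<le> G"
    and M: "\<And>t v. 0 \<le> t \<Longrightarrow> t \<le> \<tau> \<Longrightarrow> norm (S t v) \<le> M * norm v" and M0: "0 \<le> M"
  shows "norm (integral {0..\<tau>} (\<lambda>\<sigma>. S (\<tau> - \<sigma>) (g \<sigma>))) \<le> M * G * \<tau>"
proof -
  have "norm (g 0) \<le> G" using G \<tau> by simp
  then have "0 \<le> G" by (rule order_trans[OF norm_ge_zero])
  have bound: "norm (S (\<tau> - \<sigma>) (g \<sigma>)) \<le> M * G" if "\<sigma> \<in> cbox 0 \<tau>" for \<sigma>
  proof -
    have "norm (S (\<tau> - \<sigma>) (g \<sigma>)) \<le> M * norm (g \<sigma>)" using that by (intro M) auto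
    also have "\<dots> \<le> M * G" using that by (intro mult_left_mono G M0) auto
    finally show ?thesis .
  qed
  have "(\<lambda>\<sigma>. S (\<tau> - \<sigma>) (g \<sigma>)) integrable_on cbox 0 \<tau>"
    using integrable_convolution[OF g] by simp
  from has_integral_bound[OF _ integrable_integral[OF this] bound]
  show ?thesis using M0 \<open>0 \<le> G\<close> \<tau> by simp
qed

lemma semigroup_recursion_eq_sum:
  assumes \<tau>: "\<tau> \<ge> 0" and e0: "e 0 = 0" and e_Suc: "\<And>n. e (Suc n) = S \<tau> (e n) + \<delta> n"
  shows "e n = (\<Sum>k<n. S (real (n - Suc k) * \<tau>) (\<delta> k))"
proof (induction n)
  case 0
  then show ?case using e0 by simp
next
  case (Suc n)
  have "S \<tau> (S (real (n - Suc k) * \<tau>) (\<delta> k)) = S (real (Suc n - Suc k) * \<tau>) (\<delta> k)"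
    if "k < n" for k
  proof -
    have "\<tau> + real (n - Suc k) * \<tau> = real (Suc n - Suc k) * \<tau>"
      using that by (simp add: of_nat_diff algebra_simps)
    then show ?thesis using semigroup_add[OF \<tau>, of "real (n - Suc k) * \<tau>" "\<delta> k"] \<tau> by simp
  qed
  then have "S \<tau> (\<Sum>k<n. S (real (n - Suc k) * \<tau>) (\<delta> k)) = (\<Sum>k<n. S (real (Suc n - Suc k) * \<tau>) (\<delta> k))"
    by (simp add: linear_sum[OF semigroup_linear[OF \<tau>]])
  then show ?case using Suc e_Suc by simp
qed

end

lemma phi_frac_eq_integral:
  fixes S :: "real \<Rightarrow> 'a::banach \<Rightarrow> 'a"
  assumes t: "t \<ge> 0" and lam: "lam > 0"
  shows "(t powr lam * Gamma lam) *\<^sub>R phi_frac S lam t v =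
         integral {0..t} (\<lambda>\<sigma>. (\<sigma> powr (lam - 1)) *\<^sub>R S (t - \<sigma>) v)"
proof (cases "t = 0")
  case True
  then show ?thesis by simp
next
  case False
  then have tp: "t > 0" using t by simp
  define f where "f \<sigma> = (\<sigma> powr (lam - 1)) *\<^sub>R S (t - \<sigma>) v" for \<sigma>
  define I where "I = integral {0..1} (\<lambda>\<theta>. (\<theta> powr (lam - 1)) *\<^sub>R S ((1 - \<theta>) * t) v)"
  have "(\<lambda>x. x / t) ` {0..t} = {0..1}"
    using tp by (auto simp: image_iff field_simps intro!: bexI[of _ "t * _"])
  then have "integral {0..1} (\<lambda>x. f (t * x)) = (1 / t) *\<^sub>R integral {0..t} f"
    using integral_stretch_real[of t 0 t f] tp by simp
  moreover have "integral {0..1} (\<lambda>x. f (t * x))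
      = integral {0..1} (\<lambda>x. t powr (lam - 1) *\<^sub>R ((x powr (lam - 1)) *\<^sub>R S ((1 - x) * t) v))"
    by (rule integral_cong) (use t in \<open>simp add: f_def powr_mult algebra_simps\<close>)
  also have "\<dots> = t powr (lam - 1) *\<^sub>R I"
    unfolding I_def by (rule integral_cmul)
  ultimately have scaled: "(1 / t) *\<^sub>R integral {0..t} f = t powr (lam - 1) *\<^sub>R I" by simp
  have "integral {0..t} f = t *\<^sub>R ((1 / t) *\<^sub>R integral {0..t} f)" using tp by simp
  also have "\<dots> = t *\<^sub>R (t powr (lam - 1) *\<^sub>R I)" unfolding scaled ..
  also have "\<dots> = t powr lam *\<^sub>R I"
    using tp by (simp add: powr_diff)
  finally have "integral {0..t} f = t powr lam *\<^sub>R I" .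
  moreover have "Gamma lam \<noteq> 0" using Gamma_real_pos[OF lam] by simp
  ultimately show ?thesis unfolding f_def phi_frac_def I_def by (simp add: field_simps)
qed

definition interp_line :: "(real \<Rightarrow> 'a::real_vector) \<Rightarrow> real \<Rightarrow> real \<Rightarrow> real \<Rightarrow> 'a" where
  "interp_line h a b u = h a + ((u - a) / (b - a)) *\<^sub>R (h b - h a)"

text \<open>With \<open>e x = h x - h a - (x - a) h'(a)\<close> the interpolation error is
  \<open>e u - (u - a)/(b - a) e b\<close>, and \<open>\<parallel>e x\<parallel> \<le> 3B(R - L)\<bar>x - a\<bar>\<close> by linearizing twice.\<close>

lemma norm_interp_line_error_le:
  fixes h h' h'' :: "real \<Rightarrow> 'a::real_normed_vector"
  assumes h': "\<And>x. x \<in> {L..R} \<Longrightarrow> (h has_vector_derivative h' x) (at x within {L..R})"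
    and h'': "\<And>x. x \<in> {L..R} \<Longrightarrow> (h' has_vector_derivative h'' x) (at x within {L..R})"
    and B: "\<And>x. x \<in> {L..R} \<Longrightarrow> norm (h'' x) \<le> B"
    and a: "a \<in> {L..R}" and b: "b \<in> {L..R}" and u: "u \<in> {L..R}" and "a \<noteq> b"
  shows "norm (h u - interp_line h a b u) \<le> 6 * B * (R - L)\<^sup>2"
proof -
  have B0: "0 \<le> B" using B[OF a] norm_ge_zero order_trans by blast
  have seg: "closed_segment p q \<subseteq> {L..R}" if "p \<in> {L..R}" "q \<in> {L..R}" for p q
    using that by (intro closed_segment_subset) (auto simp: convex_real_interval)
  have h'_var: "norm (h' x - h' a) \<le> 3 * B * (R - L)" if x: "x \<in> {L..R}" for x
  proof -
    have "norm (h' x - h' a - (x - a) *\<^sub>R h'' a) \<le> norm (x - a) * (2 * B)"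
    proof (rule vector_differentiable_bound_linearization[OF h'' seg[OF a x] _ a])
      fix y assume "y \<in> {L..R}"
      then show "norm (h'' y - h'' a) \<le> 2 * B"
        using B[of y] B[OF a] norm_triangle_ineq4[of "h'' y" "h'' a"] by linarith
    qed
    moreover have "norm ((x - a) *\<^sub>R h'' a) \<le> \<bar>x - a\<bar> * B"
      using B[OF a] by (simp add: mult_left_mono)
    ultimately have "norm (h' x - h' a) \<le> \<bar>x - a\<bar> * (3 * B)"
      using norm_triangle_sub[of "h' x - h' a" "(x - a) *\<^sub>R h'' a"] by simp
    also have "\<dots> \<le> (R - L) * (3 * B)" using x a B0 by (intro mult_right_mono) auto
    finally show ?thesis by (simp add: mult.commute mult.left_commute)
  qed
  define e where "e x = h x - h a - (x - a) *\<^sub>R h' a" for x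
  have e: "norm (e x) \<le> \<bar>x - a\<bar> * (3 * B * (R - L))" if "x \<in> {L..R}" for x
    unfolding e_def using vector_differentiable_bound_linearization[OF h' seg[OF a that] h'_var a]
    by simp
  have "e u - k *\<^sub>R e b = h u - (h a + k *\<^sub>R (h b - h a)) + (k * (b - a) - (u - a)) *\<^sub>R h' a"
    for k by (simp add: e_def algebra_simps)
  from this[of "(u - a) / (b - a)"]
  have "h u - interp_line h a b u = e u - ((u - a) / (b - a)) *\<^sub>R e b"
    using \<open>a \<noteq> b\<close> by (simp add: interp_line_def)
  also have "norm \<dots> \<le> norm (e u) + \<bar>(u - a) / (b - a)\<bar> * norm (e b)"
    using norm_triangle_ineq4 by (metis norm_scaleR)
  also have "\<dots> \<le> \<bar>u - a\<bar> * (3 * B * (R - L)) + \<bar>(u - a) / (b - a)\<bar> * (\<bar>b - a\<bar> * (3 * B * (R - L)))"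
    by (intro add_mono mult_left_mono e u b) auto
  also have "\<dots> = 2 * (\<bar>u - a\<bar> * (3 * B * (R - L)))" using \<open>a \<noteq> b\<close> by (simp add: abs_divide)
  also have "\<dots> \<le> 2 * ((R - L) * (3 * B * (R - L)))"
    using u a B0 by (intro mult_left_mono mult_right_mono) auto
  also have "\<dots> = 6 * B * (R - L)\<^sup>2" by (simp add: power2_eq_square)
  finally show ?thesis .
qed

lemma powr_increment_le:
  fixes x r :: real
  assumes x: "0 < x" and r: "0 \<le> r" "r \<le> 1"
  shows "(x + 1) powr r - x powr r \<le> x powr (r - 1)"
proof -
  obtain z where z: "x < z" "(x + 1) powr r - x powr r = (x + 1 - x) * (r * z powr (r - 1))"
  proof -
    have "\<And>y. x \<le> y \<Longrightarrow> y \<le> x + 1 \<Longrightarrow> DERIV (\<lambda>y. y powr r) y :> r * y powr (r - 1)"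
      using x by (intro has_real_derivative_powr) linarith
    from MVT2[of x "x + 1", OF _ this] show ?thesis using that by auto
  qed
  have "z powr (r - 1) \<le> x powr (r - 1)"
    using z x r by (intro powr_mono2') auto
  moreover have "r * z powr (r - 1) \<le> z powr (r - 1)"
    using r by (intro mult_left_le_one_le) auto
  ultimately show ?thesis using z(2) by simp
qed

lemma powr_increment_scale:
  fixes x \<tau> r :: real
  assumes x: "0 \<le> x" and \<tau>: "0 < \<tau>"
  shows "((x * \<tau> + \<tau>) powr r - (x * \<tau>) powr r)\<^sup>2 * \<tau>
    = \<tau> powr (1 + 2 * r) * ((x + 1) powr r - x powr r)\<^sup>2"
proof -
  have "x * \<tau> + \<tau> = (x + 1) * \<tau>" by (simp add: algebra_simps)
  then have "(x * \<tau> + \<tau>) powr r - (x * \<tau>) powr r = \<tau> powr r * ((x + 1) powr r - x powr r)"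
    using x \<tau> by (simp add: powr_mult right_diff_distrib mult.commute)
  moreover have "1 + 2 * r = 1 + (r + r)" by simp
  then have "\<tau> powr (1 + 2 * r) = \<tau> * (\<tau> powr r * \<tau> powr r)" using \<tau> by (simp only: powr_add) simp
  ultimately show ?thesis by (simp add: power2_eq_square)
qed

definition powr_antideriv :: "real \<Rightarrow> real \<Rightarrow> real" where
  "powr_antideriv p x = (if p = 0 then ln x else x powr p / p)"

lemma has_real_derivative_powr_antideriv:
  assumes "0 < x"
  shows "DERIV (powr_antideriv p) x :> x powr (p - 1)"
proof (cases "p = 0")
  case True
  then show ?thesis
    unfolding powr_antideriv_def using DERIV_ln_divide[OF assms] assms
    by (simp add: powr_minus_divide)
next
  case False
  have "DERIV (\<lambda>y. y powr p / p) x :> p * x powr (p - 1) / p"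
    by (intro derivative_eq_intros has_real_derivative_powr assms) (use False in auto)
  then show ?thesis unfolding powr_antideriv_def using False by simp
qed

lemma powr_le_powr_antideriv_diff:
  assumes p: "p \<le> 1" and x: "0 < x"
  shows "(x + 1) powr (p - 1) \<le> powr_antideriv p (x + 1) - powr_antideriv p x"
proof -
  obtain z where z: "x < z" "z < x + 1"
    "powr_antideriv p (x + 1) - powr_antideriv p x = (x + 1 - x) * z powr (p - 1)"
  proof -
    have "\<And>y. x \<le> y \<Longrightarrow> y \<le> x + 1 \<Longrightarrow> DERIV (powr_antideriv p) y :> y powr (p - 1)"
      using x by (intro has_real_derivative_powr_antideriv) linarith
    from MVT2[of x "x + 1", OF _ this] show ?thesis using that by auto
  qed
  have "(x + 1) powr (p - 1) \<le> z powr (p - 1)"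
    using z x p by (intro powr_mono2') auto
  then show ?thesis using z(3) by simp
qed

lemma powr_antideriv_mono:
  assumes "0 < x" "x \<le> y"
  shows "powr_antideriv p x \<le> powr_antideriv p y"
proof -
  consider "p = 0" | "p > 0" | "p < 0" by linarith
  then show ?thesis
  proof cases
    case 1
    then show ?thesis using assms by (simp add: powr_antideriv_def)
  next
    case 2
    have "x powr p \<le> y powr p" using assms 2 by (intro powr_mono2) auto
    then show ?thesis using 2 by (simp add: powr_antideriv_def divide_right_mono)
  next
    case 3
    have "y powr p \<le> x powr p" using assms 3 by (intro powr_mono2') auto
    then show ?thesis using 3 by (simp add: powr_antideriv_def divide_right_mono_neg)
  qed
qed

definition powr_incr_sq_sum :: "real \<Rightarrow> nat \<Rightarrow> real" where
  "powr_incr_sq_sum r N = (\<Sum>k<N. ((real k + 1) powr r - real k powr r)\<^sup>2)"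

text \<open>Comparison of the sum with \<open>\<integral>\<^sub>1\<^sup>N x\<^sup>2\<^sup>r\<^sup>-\<^sup>2 dx\<close>, using
  \<open>(k + 1)\<^sup>r - k\<^sup>r \<le> k\<^sup>r\<^sup>-\<^sup>1\<close>; the terms \<open>k = 0, 1\<close> contribute at most \<open>2\<close>.\<close>

lemma powr_incr_sq_sum_le:
  fixes r :: real
  assumes r: "0 < r" "r < 1" and N: "N \<ge> 1"
  shows "powr_incr_sq_sum r N
    \<le> 2 + powr_antideriv (2 * r - 1) (real N) - powr_antideriv (2 * r - 1) 1"
proof -
  define d where "d k = (real k + 1) powr r - real k powr r" for k :: nat
  define G where "G = powr_antideriv (2 * r - 1)"
  have d_sq: "(d k)\<^sup>2 \<le> real k powr (2 * r - 2)" if "k \<ge> 1" for k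
  proof -
    have "0 \<le> d k" using r by (simp add: d_def powr_mono2)
    then have "(d k)\<^sup>2 \<le> (real k powr (r - 1))\<^sup>2"
      using powr_increment_le[of "real k" r] that r unfolding d_def by (intro power_mono) auto
    also have "\<dots> = real k powr ((r - 1) + (r - 1))"
      by (simp only: power2_eq_square powr_add)
    also have "\<dots> = real k powr (2 * r - 2)" by (simp add: algebra_simps)
    finally show ?thesis .
  qed
  have telescope: "(\<Sum>k<m + 2. (d k)\<^sup>2) \<le> 2 + G (real m + 1) - G 1" for m :: nat
  proof (induction m)
    case 0
    have "(d 1)\<^sup>2 \<le> 1" using d_sq[of 1] by simp
    then show ?case by (simp add: numeral_2_eq_2 d_def)
  next
    case (Suc m)
    have "(d (m + 2))\<^sup>2 \<le> (real m + 1 + 1) powr ((2 * r - 1) - 1)"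
      using d_sq[of "m + 2"] by (simp add: algebra_simps)
    also have "\<dots> \<le> G (real m + 1 + 1) - G (real m + 1)"
      unfolding G_def by (rule powr_le_powr_antideriv_diff) (use r in auto)
    finally show ?case using Suc by (simp add: algebra_simps)
  qed
  show ?thesis
  proof (cases "N = 1")
    case True
    then show ?thesis by (simp add: powr_incr_sq_sum_def powr_antideriv_def)
  next
    case False
    define m where "m = N - 2"
    have m: "N = m + 2" using N False unfolding m_def by simp
    have "G (real m + 1) \<le> G (real N)" unfolding G_def by (rule powr_antideriv_mono) (use m in auto)
    then show ?thesis using telescope[of m] m unfolding powr_incr_sq_sum_def d_def G_def by simp
  qed
qed

lemma powr_incr_sq_sum_lt_half:
  assumes "0 < r" "r < 1/2" "N \<ge> 1"
  shows "powr_incr_sq_sum r N \<le> 2 + 1 / (1 - 2 * r)"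
proof -
  have "real N powr (2 * r - 1) / (2 * r - 1) \<le> 0"
    using assms by (intro divide_nonneg_neg) auto
  moreover have "1 / (1 - 2 * r) = - (1 / (2 * r - 1))"
    using assms by (simp add: field_simps)
  ultimately show ?thesis
    using powr_incr_sq_sum_le[of r N] assms by (simp add: powr_antideriv_def)
qed

lemma powr_incr_sq_sum_half_scaled:
  fixes T :: real
  assumes T: "0 < T" and N: "N \<ge> 1"
  defines "\<tau> \<equiv> T / real N"
  shows "\<tau>\<^sup>2 * powr_incr_sq_sum (1/2) N \<le> (2 + \<bar>ln T\<bar>) * (\<tau>\<^sup>2 * (1 + \<bar>ln \<tau>\<bar>))"
proof -
  have "powr_incr_sq_sum (1/2) N \<le> 2 + ln T - ln \<tau>"
    using powr_incr_sq_sum_le[of "1/2" N] T N by (simp add: powr_antideriv_def \<tau>_def ln_div)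
  also have "\<dots> \<le> (2 + \<bar>ln T\<bar>) * (1 + \<bar>ln \<tau>\<bar>)"
  proof -
    have "(2 + \<bar>ln T\<bar>) * (1 + \<bar>ln \<tau>\<bar>) = 2 + \<bar>ln T\<bar> + 2 * \<bar>ln \<tau>\<bar> + \<bar>ln T\<bar> * \<bar>ln \<tau>\<bar>"
      by (simp add: algebra_simps)
    moreover have "0 \<le> \<bar>ln T\<bar> * \<bar>ln \<tau>\<bar>" by simp
    ultimately show ?thesis by linarith
  qed
  finally have "\<tau>\<^sup>2 * powr_incr_sq_sum (1/2) N \<le> \<tau>\<^sup>2 * ((2 + \<bar>ln T\<bar>) * (1 + \<bar>ln \<tau>\<bar>))"
    by (rule mult_left_mono) simp
  then show ?thesis by (simp add: mult_ac)
qed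

lemma powr_incr_sq_sum_gt_half_scaled:
  fixes T r :: real
  assumes T: "0 < T" and r: "1/2 < r" "r < 1" and N: "N \<ge> 1"
  defines "\<tau> \<equiv> T / real N" and "p \<equiv> 2 * r - 1"
  shows "\<tau> powr (1 + 2 * r) * powr_incr_sq_sum r N \<le> (2 * T powr p + T powr p / p) * \<tau> powr 2"
proof -
  have p: "0 < p" and \<tau>: "0 < \<tau>" "\<tau> \<le> T" using r T N by (auto simp: p_def \<tau>_def field_simps)
  have "powr_incr_sq_sum r N \<le> 2 + real N powr p / p"
    using powr_incr_sq_sum_le[of r N] r N p
    by (simp add: powr_antideriv_def p_def) (smt (verit) divide_pos_pos)
  then have "\<tau> powr p * powr_incr_sq_sum r N \<le> \<tau> powr p * (2 + real N powr p / p)"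
    by (rule mult_left_mono) simp
  also have "\<dots> = 2 * \<tau> powr p + (\<tau> * real N) powr p / p"
    using \<tau> by (simp add: powr_mult algebra_simps)
  also have "\<dots> \<le> 2 * T powr p + T powr p / p"
    using \<tau> p N by (simp add: \<tau>_def powr_mono2)
  finally have "\<tau> powr 2 * (\<tau> powr p * powr_incr_sq_sum r N) \<le> \<tau> powr 2 * (2 * T powr p + T powr p / p)"
    by (rule mult_left_mono) simp
  moreover have "\<tau> powr (1 + 2 * r) = \<tau> powr 2 * \<tau> powr p"
    by (simp add: p_def powr_add[symmetric])
  ultimately show ?thesis by (simp add: mult_ac)
qed

lemma powr_incr_sq_sum_rate:
  fixes T r :: real
  assumes T: "T > 0" and r: "0 < r" "r < 1"
  shows "\<exists>C. \<forall>N::nat. N \<ge> 1 \<longrightarrow> (T / real N) powr (1 + 2 * r) * powr_incr_sq_sum r N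
      \<le> C * (if r = 1/2 then (T / real N)\<^sup>2 * (1 + \<bar>ln (T / real N)\<bar>)
             else (T / real N) powr (min (1 + 2 * r) 2))"
proof -
  consider "r < 1/2" | "r = 1/2" | "r > 1/2" by linarith
  then show ?thesis
  proof cases
    case 1
    then have "(T / real N) powr (1 + 2 * r) * powr_incr_sq_sum r N
        \<le> (2 + 1 / (1 - 2 * r)) * (T / real N) powr (1 + 2 * r)" if "N \<ge> 1" for N
      using powr_incr_sq_sum_lt_half[OF r(1) 1 that] by (subst mult.commute) (intro mult_right_mono; simp)
    then show ?thesis using 1 by (intro exI[of _ "2 + 1 / (1 - 2 * r)"]) simp
  next
    case 2
    have "(T / real N) powr (1 + 2 * (1/2)) = (T / real N)\<^sup>2" if "N \<ge> 1" for N
      using T that by simp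
    then show ?thesis
      unfolding 2 using powr_incr_sq_sum_half_scaled[OF T] by (intro exI[of _ "2 + \<bar>ln T\<bar>"]) simp
  next
    case 3
    then show ?thesis
      using powr_incr_sq_sum_gt_half_scaled[OF T 3 r(2)]
      by (intro exI[of _ "2 * T powr (2 * r - 1) + T powr (2 * r - 1) / (2 * r - 1)"]) simp
  qed
qed

lemma continuous_on_powr_shift:
  fixes r :: real
  assumes "0 < r" "0 \<le> a"
  shows "continuous_on {0..t} (\<lambda>\<sigma>. (a + \<sigma>) powr r)"
  by (rule continuous_on_powr') (use assms in \<open>auto intro!: continuous_intros\<close>)

lemma phi_frac_1_eq_integral:
  fixes S :: "real \<Rightarrow> 'a::banach \<Rightarrow> 'a"
  assumes "\<tau> > 0"
  shows "\<tau> *\<^sub>R phi_frac S 1 \<tau> w = integral {0..\<tau>} (\<lambda>\<sigma>. S (\<tau> - \<sigma>) w)"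
proof -
  have "(\<tau> powr 1 * Gamma 1) *\<^sub>R phi_frac S 1 \<tau> w
      = integral {0..\<tau>} (\<lambda>\<sigma>. (\<sigma> powr (1 - 1)) *\<^sub>R S (\<tau> - \<sigma>) w)"
    by (rule phi_frac_eq_integral) (use assms in auto)
  also have "\<dots> = integral {0..\<tau>} (\<lambda>\<sigma>. S (\<tau> - \<sigma>) w)"
    by (rule integral_spike[of "{0}"]) auto
  finally show ?thesis using assms by simp
qed

context
  fixes S :: "real \<Rightarrow> 'a::banach \<Rightarrow> 'a" and r :: real
  assumes C0: "C0_semigroup S" and r: "0 < r"
begin

lemma phi_frac_1_plus_eq_integral:
  assumes "t \<ge> 0"
  shows "Gamma (1 + r) *\<^sub>R (t powr (1 + r) *\<^sub>R phi_frac S (1 + r) t w)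
       = integral {0..t} (\<lambda>\<sigma>. S (t - \<sigma>) ((\<sigma> powr r) *\<^sub>R w))"
proof -
  have "(t powr (1 + r) * Gamma (1 + r)) *\<^sub>R phi_frac S (1 + r) t w
      = integral {0..t} (\<lambda>\<sigma>. (\<sigma> powr (1 + r - 1)) *\<^sub>R S (t - \<sigma>) w)"
    by (rule phi_frac_eq_integral) (use assms r in auto)
  also have "\<dots> = integral {0..t} (\<lambda>\<sigma>. S (t - \<sigma>) ((\<sigma> powr r) *\<^sub>R w))"
    by (rule integral_cong) (use linear_scale[OF semigroup_linear[OF C0]] in auto)
  finally show ?thesis by (simp add: mult.commute)
qed

text \<open>The \<open>\<phi>\<^sub>1\<^sub>+\<^sub>r\<close>-term is a difference of two convolutions from time \<open>0\<close>, which
  splitting the longer one reduces to a convolution over \<open>[0, \<tau>]\<close>.\<close>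

lemma phi_terms_eq_integral:
  assumes a: "0 \<le> a" and \<tau>: "0 < \<tau>"
  shows "\<tau> *\<^sub>R phi_frac S 1 \<tau> \<alpha>0 + Gamma (1 + r) *\<^sub>R
            ((a + \<tau>) powr (1 + r) *\<^sub>R phi_frac S (1 + r) (a + \<tau>) \<alpha>1
             - a powr (1 + r) *\<^sub>R S \<tau> (phi_frac S (1 + r) a \<alpha>1))
       = integral {0..\<tau>} (\<lambda>\<sigma>. S (\<tau> - \<sigma>) (\<alpha>0 + ((a + \<sigma>) powr r) *\<^sub>R \<alpha>1))"
proof -
  have \<tau>0: "0 \<le> \<tau>" using \<tau> by simp
  have g: "continuous_on {0..a + \<tau>} (\<lambda>\<sigma>. (\<sigma> powr r) *\<^sub>R \<alpha>1)"
    by (intro continuous_intros continuous_on_powr') (use r in auto)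
  have g': "continuous_on {0..\<tau>} (\<lambda>\<sigma>. ((a + \<sigma>) powr r) *\<^sub>R \<alpha>1)"
    by (intro continuous_intros continuous_on_powr_shift r a)
  have "Gamma (1 + r) *\<^sub>R ((a + \<tau>) powr (1 + r) *\<^sub>R phi_frac S (1 + r) (a + \<tau>) \<alpha>1
             - a powr (1 + r) *\<^sub>R S \<tau> (phi_frac S (1 + r) a \<alpha>1))
      = Gamma (1 + r) *\<^sub>R ((a + \<tau>) powr (1 + r) *\<^sub>R phi_frac S (1 + r) (a + \<tau>) \<alpha>1)
        - S \<tau> (Gamma (1 + r) *\<^sub>R (a powr (1 + r) *\<^sub>R phi_frac S (1 + r) a \<alpha>1))"
    by (simp add: linear_scale[OF semigroup_linear[OF C0 \<tau>0]] scaleR_diff_right)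
  also have "\<dots> = integral {0..\<tau>} (\<lambda>\<sigma>. S (\<tau> - \<sigma>) (((a + \<sigma>) powr r) *\<^sub>R \<alpha>1))"
    unfolding phi_frac_1_plus_eq_integral[OF a] phi_frac_1_plus_eq_integral[OF add_nonneg_nonneg[OF a \<tau>0]]
    using integral_convolution_split[OF C0 g a \<tau>0] a \<tau> by simp
  also have "\<tau> *\<^sub>R phi_frac S 1 \<tau> \<alpha>0 + \<dots>
      = integral {0..\<tau>} (\<lambda>\<sigma>. S (\<tau> - \<sigma>) \<alpha>0 + S (\<tau> - \<sigma>) (((a + \<sigma>) powr r) *\<^sub>R \<alpha>1))"
    unfolding phi_frac_1_eq_integral[OF \<tau>]
    by (intro integral_add[symmetric] integrable_convolution[OF C0] g') auto
  also have "\<dots> = integral {0..\<tau>} (\<lambda>\<sigma>. S (\<tau> - \<sigma>) (\<alpha>0 + ((a + \<sigma>) powr r) *\<^sub>R \<alpha>1))"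
    by (rule integral_cong) (use linear_add[OF semigroup_linear[OF C0]] in auto)
  finally show ?thesis by (simp add: add.assoc)
qed

lemma eqrf2_Suc_eq_integral:
  assumes \<tau>: "0 < \<tau>"
  shows "eqrf2 S h r c1 c2 \<tau> y0 (Suc n) = S \<tau> (eqrf2 S h r c1 c2 \<tau> y0 n)
    + integral {0..\<tau>} (\<lambda>\<sigma>. S (\<tau> - \<sigma>) (interp_line h ((real n * \<tau> + c1 * \<tau>) powr r)
        ((real n * \<tau> + c2 * \<tau>) powr r) ((real n * \<tau> + \<sigma>) powr r)))"
proof -
  define t where "t = real n * \<tau>"
  define a where "a = (t + c1 * \<tau>) powr r"
  define b where "b = (t + c2 * \<tau>) powr r"
  define \<alpha>1 where "\<alpha>1 = (1 / (b - a)) *\<^sub>R (h b - h a)"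
  define \<alpha>0 where "\<alpha>0 = h a - a *\<^sub>R \<alpha>1"
  have "\<alpha>0 + u *\<^sub>R \<alpha>1 = interp_line h a b u" for u
  proof -
    have "\<alpha>0 + u *\<^sub>R \<alpha>1 = h a + (u - a) *\<^sub>R \<alpha>1" by (simp add: \<alpha>0_def algebra_simps)
    then show ?thesis by (simp add: \<alpha>1_def interp_line_def divide_inverse)
  qed
  moreover have "eqrf2 S h r c1 c2 \<tau> y0 (Suc n) = S \<tau> (eqrf2 S h r c1 c2 \<tau> y0 n)
      + integral {0..\<tau>} (\<lambda>\<sigma>. S (\<tau> - \<sigma>) (\<alpha>0 + ((t + \<sigma>) powr r) *\<^sub>R \<alpha>1))"
    unfolding eqrf2.simps Let_def t_def[symmetric] a_def[symmetric] b_def[symmetric]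
      \<alpha>1_def[symmetric] \<alpha>0_def[symmetric] add.assoc
    using phi_terms_eq_integral[OF _ \<tau>, of t \<alpha>0 \<alpha>1] \<tau> by (simp add: t_def)
  ultimately show ?thesis by (simp add: t_def a_def b_def)
qed

lemma mild_sol_step:
  assumes h: "continuous_on {0..} h" and a: "0 \<le> a" and \<tau>: "0 \<le> \<tau>"
  shows "mild_sol S h r y0 (a + \<tau>)
       = S \<tau> (mild_sol S h r y0 a) + integral {0..\<tau>} (\<lambda>\<sigma>. S (\<tau> - \<sigma>) (h ((a + \<sigma>) powr r)))"
proof -
  have "continuous_on {0..a + \<tau>} (\<lambda>s. h (s powr r))"
    using continuous_on_powr_shift[OF r, of 0 "a + \<tau>"]
    by (auto intro: continuous_on_compose2[OF h])
  moreover have "S (a + \<tau>) y0 = S \<tau> (S a y0)"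
    using semigroup_add[OF C0 \<tau> a] by (simp add: add.commute)
  ultimately show ?thesis
    unfolding mild_sol_def using integral_convolution_split[OF C0 _ a \<tau>]
      linear_add[OF semigroup_linear[OF C0 \<tau>]] by simp
qed

lemma continuous_on_interp_line_powr_shift:
  fixes h :: "real \<Rightarrow> 'a"
  assumes "0 \<le> t"
  shows "continuous_on {0..\<tau>} (\<lambda>\<sigma>. interp_line h a b ((t + \<sigma>) powr r))"
proof -
  have "continuous_on UNIV (interp_line h a b)"
    unfolding interp_line_def divide_inverse by (intro continuous_intros)
  then show ?thesis
    using continuous_on_powr_shift[OF r assms] continuous_on_compose2 by blast
qed

lemma eqrf2_error_Suc:
  fixes m :: nat
  assumes h: "continuous_on {0..} h" and \<tau>: "0 < \<tau>"
  defines "t \<equiv> real m * \<tau>"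
  shows "mild_sol S h r y0 (real (Suc m) * \<tau>) - eqrf2 S h r c1 c2 \<tau> y0 (Suc m)
       = S \<tau> (mild_sol S h r y0 t - eqrf2 S h r c1 c2 \<tau> y0 m)
         + integral {0..\<tau>} (\<lambda>\<sigma>. S (\<tau> - \<sigma>) (h ((t + \<sigma>) powr r)
             - interp_line h ((t + c1 * \<tau>) powr r) ((t + c2 * \<tau>) powr r) ((t + \<sigma>) powr r)))"
proof -
  have t: "0 \<le> t" using \<tau> by (simp add: t_def)
  have lin: "linear (S s)" if "0 \<le> s" for s using semigroup_linear[OF C0 that] .
  have "continuous_on {0..\<tau>} (\<lambda>\<sigma>. h ((t + \<sigma>) powr r))"
    using continuous_on_powr_shift[OF r t] by (auto intro: continuous_on_compose2[OF h])
  note integrable = integrable_convolution[OF C0 this]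
    integrable_convolution[OF C0 continuous_on_interp_line_powr_shift[OF t]]
  have "real (Suc m) * \<tau> = t + \<tau>" by (simp add: t_def algebra_simps)
  then have "mild_sol S h r y0 (real (Suc m) * \<tau>) - eqrf2 S h r c1 c2 \<tau> y0 (Suc m)
      = S \<tau> (mild_sol S h r y0 t) - S \<tau> (eqrf2 S h r c1 c2 \<tau> y0 m)
        + (integral {0..\<tau>} (\<lambda>\<sigma>. S (\<tau> - \<sigma>) (h ((t + \<sigma>) powr r)))
           - integral {0..\<tau>} (\<lambda>\<sigma>. S (\<tau> - \<sigma>) (interp_line h ((t + c1 * \<tau>) powr r)
               ((t + c2 * \<tau>) powr r) ((t + \<sigma>) powr r))))"
    unfolding eqrf2_Suc_eq_integral[OF \<tau>] t_def[symmetric]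
    by (simp add: mild_sol_step[OF h t less_imp_le[OF \<tau>]])
  also have "S \<tau> (mild_sol S h r y0 t) - S \<tau> (eqrf2 S h r c1 c2 \<tau> y0 m)
      = S \<tau> (mild_sol S h r y0 t - eqrf2 S h r c1 c2 \<tau> y0 m)"
    using linear_diff[OF lin] \<tau> by simp
  also have "integral {0..\<tau>} (\<lambda>\<sigma>. S (\<tau> - \<sigma>) (h ((t + \<sigma>) powr r)))
           - integral {0..\<tau>} (\<lambda>\<sigma>. S (\<tau> - \<sigma>) (interp_line h ((t + c1 * \<tau>) powr r)
               ((t + c2 * \<tau>) powr r) ((t + \<sigma>) powr r)))
      = integral {0..\<tau>} (\<lambda>\<sigma>. S (\<tau> - \<sigma>) (h ((t + \<sigma>) powr r)
             - interp_line h ((t + c1 * \<tau>) powr r) ((t + c2 * \<tau>) powr r) ((t + \<sigma>) powr r)))"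
    unfolding integral_diff[OF integrable, symmetric]
    by (rule integral_cong) (simp add: linear_diff[OF lin])
  finally show ?thesis .
qed

lemma eqrf2_local_error_le:
  fixes h h' h'' :: "real \<Rightarrow> 'a"
  assumes h': "\<And>s. s \<ge> 0 \<Longrightarrow> (h has_vector_derivative h' s) (at s within {0..})"
    and h'': "\<And>s. s \<ge> 0 \<Longrightarrow> (h' has_vector_derivative h'' s) (at s within {0..})"
    and B: "\<And>s. s \<ge> 0 \<Longrightarrow> norm (h'' s) \<le> B"
    and c1: "c1 \<in> {0..1}" and c2: "c2 \<in> {0..1}" and "c1 \<noteq> c2"
    and t: "0 \<le> t" and \<tau>: "0 < \<tau>"
    and M: "\<And>s v. 0 \<le> s \<Longrightarrow> s \<le> \<tau> \<Longrightarrow> norm (S s v) \<le> M * norm v" and M0: "0 \<le> M"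
  shows "norm (integral {0..\<tau>} (\<lambda>\<sigma>. S (\<tau> - \<sigma>) (h ((t + \<sigma>) powr r)
             - interp_line h ((t + c1 * \<tau>) powr r) ((t + c2 * \<tau>) powr r) ((t + \<sigma>) powr r))))
         \<le> M * (6 * B * ((t + \<tau>) powr r - t powr r)\<^sup>2) * \<tau>"
proof -
  define L where "L = t powr r"
  define R where "R = (t + \<tau>) powr r"
  have mono: "x powr r \<le> y powr r" if "0 \<le> x" "x \<le> y" for x y :: real
    using that r by (intro powr_mono2) auto
  have in_LR: "(t + x) powr r \<in> {L..R}" if "0 \<le> x" "x \<le> \<tau>" for x
    unfolding L_def R_def using that t by (auto intro!: mono)
  have c_in_LR: "(t + c * \<tau>) powr r \<in> {L..R}" if "c \<in> {0..1}" for c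
    using in_LR[of "c * \<tau>"] that \<tau> by (simp add: mult_left_le_one_le)
  have strict: "(t + c * \<tau>) powr r < (t + c' * \<tau>) powr r" if "c \<in> {0..1}" "c < c'" for c c'
    using that t \<tau> by (intro powr_less_mono2 r) auto
  have nodes: "(t + c1 * \<tau>) powr r \<noteq> (t + c2 * \<tau>) powr r"
    using \<open>c1 \<noteq> c2\<close> strict[OF c1, of c2] strict[OF c2, of c1] by (cases "c1 < c2") auto
  have LR_nonneg: "0 \<le> x" if "x \<in> {L..R}" for x
    using that order_trans[OF powr_ge_zero[of t r]] by (auto simp: L_def)
  have h'_LR: "(h has_vector_derivative h' x) (at x within {L..R})"
    and h''_LR: "(h' has_vector_derivative h'' x) (at x within {L..R})" if "x \<in> {L..R}" for x
  proof -
    have "{L..R} \<subseteq> {0..}" "x \<ge> 0" using LR_nonneg that by auto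
    then show "(h has_vector_derivative h' x) (at x within {L..R})"
      and "(h' has_vector_derivative h'' x) (at x within {L..R})"
      using h' h'' has_vector_derivative_within_subset by blast+
  qed
  have "norm (h ((t + \<sigma>) powr r) - interp_line h ((t + c1 * \<tau>) powr r) ((t + c2 * \<tau>) powr r)
      ((t + \<sigma>) powr r)) \<le> 6 * B * (R - L)\<^sup>2" if "\<sigma> \<in> {0..\<tau>}" for \<sigma>
    using that B LR_nonneg
    by (intro norm_interp_line_error_le[OF h'_LR h''_LR _ c_in_LR[OF c1] c_in_LR[OF c2] in_LR nodes])
      auto
  moreover have "continuous_on {0..} h"
    by (rule continuous_on_vector_derivative) (use h' in auto)
  then have "continuous_on {0..\<tau>} (\<lambda>\<sigma>. h ((t + \<sigma>) powr r)
      - interp_line h ((t + c1 * \<tau>) powr r) ((t + c2 * \<tau>) powr r) ((t + \<sigma>) powr r))"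
    using continuous_on_powr_shift[OF r t] continuous_on_interp_line_powr_shift[OF t]
    by (intro continuous_on_diff) (auto intro: continuous_on_compose2)
  ultimately show ?thesis
    unfolding L_def R_def using M M0 \<tau> by (intro norm_integral_convolution_le[OF C0]) auto
qed

lemma eqrf2_error_le:
  fixes h h' h'' :: "real \<Rightarrow> 'a"
  assumes h': "\<And>s. s \<ge> 0 \<Longrightarrow> (h has_vector_derivative h' s) (at s within {0..})"
    and h'': "\<And>s. s \<ge> 0 \<Longrightarrow> (h' has_vector_derivative h'' s) (at s within {0..})"
    and B: "\<And>s. s \<ge> 0 \<Longrightarrow> norm (h'' s) \<le> B"
    and c: "c1 \<in> {0..1}" "c2 \<in> {0..1}" "c1 \<noteq> c2" and \<tau>: "0 < \<tau>"
    and M: "\<And>t v. 0 \<le> t \<Longrightarrow> t \<le> real n * \<tau> \<Longrightarrow> norm (S t v) \<le> M * norm v" and M0: "0 \<le> M"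
  shows "norm (mild_sol S h r y0 (real n * \<tau>) - eqrf2 S h r c1 c2 \<tau> y0 n)
    \<le> 6 * M\<^sup>2 * B * (\<tau> powr (1 + 2 * r) * powr_incr_sq_sum r n)"
proof -
  define e where "e m = mild_sol S h r y0 (real m * \<tau>) - eqrf2 S h r c1 c2 \<tau> y0 m" for m
  define \<delta> where "\<delta> m = integral {0..\<tau>} (\<lambda>\<sigma>. S (\<tau> - \<sigma>) (h ((real m * \<tau> + \<sigma>) powr r)
    - interp_line h ((real m * \<tau> + c1 * \<tau>) powr r) ((real m * \<tau> + c2 * \<tau>) powr r)
        ((real m * \<tau> + \<sigma>) powr r)))" for m
  have "continuous_on {0..} h"
    by (rule continuous_on_vector_derivative) (use h' in auto)
  then have "e (Suc m) = S \<tau> (e m) + \<delta> m" for m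
    unfolding e_def \<delta>_def by (rule eqrf2_error_Suc[OF _ \<tau>])
  moreover have "e 0 = 0" by (simp add: e_def mild_sol_def semigroup_zero[OF C0])
  ultimately have e_sum: "e n = (\<Sum>k<n. S (real (n - Suc k) * \<tau>) (\<delta> k))"
    using semigroup_recursion_eq_sum[OF C0] \<tau> by simp
  have "norm (S (real (n - Suc k) * \<tau>) (\<delta> k))
      \<le> 6 * M\<^sup>2 * B * (\<tau> powr (1 + 2 * r) * ((real k + 1) powr r - real k powr r)\<^sup>2)" if "k < n" for k
  proof -
    have "real (n - Suc k) * \<tau> \<le> real n * \<tau>" and \<tau>_le: "\<tau> \<le> real n * \<tau>"
      using that \<tau> by (auto intro: mult_right_mono)
    then have S_le: "norm (S (real (n - Suc k) * \<tau>) (\<delta> k)) \<le> M * norm (\<delta> k)"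
      using \<tau> by (intro M) auto
    have "norm (S s v) \<le> M * norm v" if "0 \<le> s" "s \<le> \<tau>" for s v
      using M that \<tau>_le by (meson order_trans)
    then have "norm (\<delta> k) \<le> M * (6 * B * ((real k * \<tau> + \<tau>) powr r - (real k * \<tau>) powr r)\<^sup>2) * \<tau>"
      unfolding \<delta>_def using \<tau> M0 by (intro eqrf2_local_error_le[OF h' h'' B c]) auto
    with S_le M0 have "norm (S (real (n - Suc k) * \<tau>) (\<delta> k))
        \<le> M * (M * (6 * B * ((real k * \<tau> + \<tau>) powr r - (real k * \<tau>) powr r)\<^sup>2) * \<tau>)"
      by (meson mult_left_mono order_trans)
    also have "M * (M * (6 * B * X) * \<tau>) = 6 * M\<^sup>2 * B * (X * \<tau>)" for X
      by (simp add: power2_eq_square mult_ac)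
    finally show ?thesis using powr_increment_scale[of "real k" \<tau> r] \<tau> by simp
  qed
  then have "norm (e n) \<le> (\<Sum>k<n. 6 * M\<^sup>2 * B * (\<tau> powr (1 + 2 * r) * ((real k + 1) powr r - real k powr r)\<^sup>2))"
    unfolding e_sum by (intro order_trans[OF norm_sum sum_mono]) auto
  then show ?thesis by (simp add: e_def powr_incr_sq_sum_def sum_distrib_left)
qed

end

theorem theorem2:
  fixes S :: "real \<Rightarrow> 'a::banach \<Rightarrow> 'a"
    and h h' h'' :: "real \<Rightarrow> 'a"
    and T r c1 c2 :: real and y0 :: 'a
  assumes "C0_semigroup S"
    and "T > 0" and "0 < r" and "r < 1"
    and "c1 \<in> {0..1}" and "c2 \<in> {0..1}" and "c1 \<noteq> c2"
    and "\<And>s. s \<ge> 0 \<Longrightarrow> (h has_vector_derivative h' s) (at s within {0..})"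
    and "\<And>s. s \<ge> 0 \<Longrightarrow> (h' has_vector_derivative h'' s) (at s within {0..})"
    and "bounded (h' ` {0..})" and "bounded (h'' ` {0..})"
  shows "\<exists>C. \<forall>N::nat. N \<ge> 1 \<longrightarrow> (\<forall>n\<le>N.
           norm (mild_sol S h r y0 (real n * (T / real N)) - eqrf2 S h r c1 c2 (T / real N) y0 n)
           \<le> C * (if r = 1/2 then (T / real N)\<^sup>2 * (1 + \<bar>ln (T / real N)\<bar>)
                  else (T / real N) powr (min (1 + 2 * r) 2)))"
proof -
  note C0 = assms(1) and T = assms(2) and r = assms(3,4)
  define rate where "rate N = (if r = 1/2 then (T / real N)\<^sup>2 * (1 + \<bar>ln (T / real N)\<bar>)
    else (T / real N) powr (min (1 + 2 * r) 2))" for N :: nat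
  obtain B where B: "\<And>s. s \<ge> 0 \<Longrightarrow> norm (h'' s) \<le> B"
    using assms(11) unfolding bounded_iff by auto
  obtain M where "M \<ge> 1" and M: "\<And>t v. 0 \<le> t \<Longrightarrow> t \<le> T \<Longrightarrow> norm (S t v) \<le> M * norm v"
    using semigroup_bounded[OF C0, of T] by blast
  have "0 \<le> B" using B[of 0] norm_ge_zero order_trans by blast
  then have K: "0 \<le> 6 * M\<^sup>2 * B" by simp
  obtain C where C: "\<And>N. N \<ge> 1 \<Longrightarrow> (T / real N) powr (1 + 2 * r) * powr_incr_sq_sum r N \<le> C * rate N"
    using powr_incr_sq_sum_rate[OF T r] unfolding rate_def by blast
  have "norm (mild_sol S h r y0 (real n * (T / real N)) - eqrf2 S h r c1 c2 (T / real N) y0 n)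
      \<le> 6 * M\<^sup>2 * B * C * rate N" if N: "N \<ge> 1" and "n \<le> N" for N n :: nat
  proof -
    have "real n * (T / real N) \<le> T" using T that by (simp add: field_simps)
    then have "norm (mild_sol S h r y0 (real n * (T / real N)) - eqrf2 S h r c1 c2 (T / real N) y0 n)
        \<le> 6 * M\<^sup>2 * B * ((T / real N) powr (1 + 2 * r) * powr_incr_sq_sum r n)"
      using M \<open>M \<ge> 1\<close> T N by (intro eqrf2_error_le[OF C0 r(1) assms(8,9) B assms(5-7)]) auto
    also have "\<dots> \<le> 6 * M\<^sup>2 * B * ((T / real N) powr (1 + 2 * r) * powr_incr_sq_sum r N)"
      unfolding powr_incr_sq_sum_def using K \<open>n \<le> N\<close> by (intro mult_left_mono sum_mono2) auto
    also have "\<dots> \<le> 6 * M\<^sup>2 * B * C * rate N"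
      unfolding mult.assoc[of "6 * M\<^sup>2 * B"] by (intro mult_left_mono C N K)
    finally show ?thesis .
  qed
  then show ?thesis unfolding rate_def by blast
qed

end
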